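(* Let the setting of the context hold, fix $x\in\mathcal{X}$, and assume $|\mathcal{L}_f(z,t)|\le M$ for all $z$ and $t\in\{0,1\}$. Then $$\epsilon_{CF}(x)\le\sum_{t\in\{0,1\}}p(1-t\mid x)\,\epsilon_{F,t}(x)+M\,\mathbb{D}(x),$$ where $\epsilon_{CF}(x):=\sum_t p(1-t\mid x)\,\epsilon_{CF,t}(x)$ and $\mathbb{D}(x):=\sum_t\sqrt{D_{\mathrm{KL}}(q_t(\cdot\mid x)\,\Vert\,q_{1-t}(\cdot\mid x))/2}$.
   Context: Binary treatment $T\in\{0,1\}$, covariates $X\in\mathcal{X}$, real-valued potential outcomes $Y(t)$, observed $Y=Y(T)$, observational distribution $p(x,y,t)$. $\mathbb{P}_t$ ($t=0,1$) are functions of $X$ and $p_{Y(t)\mid\mathbb{P}_t}(y\mid P)$ denotes the conditional density of $Y(t)$ given $\mathbb{P}_t(X)=P$. Let $f_t,g_t$ be functions of $z$ and $q_\phi(z\mid x,y,t)$ a conditional density; $q_t(z\mid x):=\mathbb{E}_{p(y\mid x,t)}q_\phi(z\mid x,y,t)$. Define $\mathcal{L}_f(z,t):=g_t(z)^{-2}\int(y-f_t(z))^2p_{Y(t)\mid\mathbb{P}_t}(y\mid z)\,dy$, $\epsilon_{F,t}(x):=\mathbb{E}_{q_t(z\mid x)}\mathcal{L}_f(z,t)$, and $\epsilon_{CF,t}(x):=\mathbb{E}_{q_{1-t}(z\mid x)}\mathcal{L}_f(z,t)$. *)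

theory Defs
  imports "HOL-Probability.Probability"
begin

text \<open>Treatment indices t are naturals restricted to {0,1}; 1 - t is the other arm.
  The latent z ranges over a measure space Z (base measure for the densities q),
  outcomes y are real with Lebesgue measure.\<close>

text \<open>q_t(z|x) := E_{p(y|x,t)} q_phi(z|x,y,t);  py x t y is the conditional density p(y|x,t),
  qphi x y t z is q_phi(z|x,y,t).\<close>
definition qmarg :: "('x \<Rightarrow> nat \<Rightarrow> real \<Rightarrow> real) \<Rightarrow> ('x \<Rightarrow> real \<Rightarrow> nat \<Rightarrow> 'z \<Rightarrow> real)
    \<Rightarrow> 'x \<Rightarrow> nat \<Rightarrow> 'z \<Rightarrow> real" where
  "qmarg py qphi x t z = (\<integral>y. py x t y * qphi x y t z \<partial>lborel)"

text \<open>L_f(z,t) := g_t(z)^(-2) * int (y - f_t(z))^2 p_{Y(t)|P_t}(y|z) dy;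
  pYP t P y is the conditional density of Y(t) given P_t(X) = P.\<close>
definition Lf :: "(nat \<Rightarrow> 'z \<Rightarrow> real) \<Rightarrow> (nat \<Rightarrow> 'z \<Rightarrow> real) \<Rightarrow> (nat \<Rightarrow> 'z \<Rightarrow> real \<Rightarrow> real)
    \<Rightarrow> 'z \<Rightarrow> nat \<Rightarrow> real" where
  "Lf f g pYP z t = (g t z) powi (-2) * (\<integral>y. (y - f t z)^2 * pYP t z y \<partial>lborel)"

definition epsF :: "'z measure \<Rightarrow> ('x \<Rightarrow> nat \<Rightarrow> 'z \<Rightarrow> real) \<Rightarrow> ('z \<Rightarrow> nat \<Rightarrow> real)
    \<Rightarrow> nat \<Rightarrow> 'x \<Rightarrow> real" where
  "epsF Z q L t x = (\<integral>z. q x t z * L z t \<partial>Z)"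

definition epsCFt :: "'z measure \<Rightarrow> ('x \<Rightarrow> nat \<Rightarrow> 'z \<Rightarrow> real) \<Rightarrow> ('z \<Rightarrow> nat \<Rightarrow> real)
    \<Rightarrow> nat \<Rightarrow> 'x \<Rightarrow> real" where
  "epsCFt Z q L t x = (\<integral>z. q x (1 - t) z * L z t \<partial>Z)"

text \<open>eps_CF(x) := sum_t p(1-t|x) eps_CF,t(x); pT x t is p(t|x).\<close>
definition epsCF :: "'z measure \<Rightarrow> ('x \<Rightarrow> nat \<Rightarrow> real) \<Rightarrow> ('x \<Rightarrow> nat \<Rightarrow> 'z \<Rightarrow> real)
    \<Rightarrow> ('z \<Rightarrow> nat \<Rightarrow> real) \<Rightarrow> 'x \<Rightarrow> real" where
  "epsCF Z pT q L x = (\<Sum>t\<in>{0,1::nat}. pT x (1 - t) * epsCFt Z q L t x)"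

text \<open>Library convention:
  KL_divergence b M N = int log_b (dN/dM) dN = D_KL(N || M).\<close>
definition KLdiv :: "'z measure \<Rightarrow> ('z \<Rightarrow> real) \<Rightarrow> ('z \<Rightarrow> real) \<Rightarrow> ereal" where
  "KLdiv Z p q =
    (let P = density Z (\<lambda>z. ennreal (p z)); Q = density Z (\<lambda>z. ennreal (q z)) in
     if absolutely_continuous Q P \<and> integrable P (entropy_density (exp 1) Q P)
     then ereal (KL_divergence (exp 1) Q P) else \<infinity>)"

definition ereal_sqrt :: "ereal \<Rightarrow> ereal" where
  "ereal_sqrt a = (case a of ereal r \<Rightarrow> ereal (sqrt r) | PInfty \<Rightarrow> \<infinity> | MInfty \<Rightarrow> 0)"

definition Dx :: "'z measure \<Rightarrow> ('x \<Rightarrow> nat \<Rightarrow> 'z \<Rightarrow> real) \<Rightarrow> 'x \<Rightarrow> ereal" where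
  "Dx Z q x = (\<Sum>t\<in>{0,1::nat}. ereal_sqrt (KLdiv Z (q x t) (q x (1 - t)) / 2))"

end

theory Submission
  imports Defs
begin

text \<open>For each arm t, eps_CF,t(x) - eps_F,t(x) is the integral of (q_(1-t) - q_t) L_f(-, t),
  hence at most M ||q_0 - q_1||_1; as the weights p(1 - t | x) sum to one, the same bound holds for
  the weighted sums. Pinsker's inequality ||p - q||_1 \<le> 2 sqrt (D_KL(p || q) / 2), applied in both
  directions and averaged, bounds ||q_0 - q_1||_1 by D(x). Pinsker's inequality itself comes from
  integrating the pointwise bound |p - q| \<le> c (2p + 4q) / 6 + (p ln (p / q) - p + q) / (2c), a
  consequence of 3 (u - 1)^2 \<le> (2u + 4) (u ln u - u + 1) and AM-GM, and optimising over c > 0.\<close>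

lemma ln_ge_rational_lower_bound:
  fixes u :: real
  assumes "0 < u"
  shows "(u - 1) * (5 * u + 1) / (2 * u * (u + 2)) \<le> ln u"
proof -
  define h where "h u = ln u - (u - 1) * (5 * u + 1) / (2 * u * (u + 2))" for u :: real
  have deriv: "(h has_real_derivative (v - 1) ^ 3 / (v\<^sup>2 * (v + 2)\<^sup>2)) (at v)" if "0 < v" for v
  proof -
    have "(h has_real_derivative 1 / v - ((5 * v + 1 + (v - 1) * 5) * (2 * v * (v + 2))
        - (v - 1) * (5 * v + 1) * (2 * (v + 2) + 2 * v)) / (2 * v * (v + 2))\<^sup>2) (at v)"
      unfolding h_def [abs_def] using that
      by (auto intro!: derivative_eq_intros simp: power2_eq_square)
    moreover have "1 / v - ((5 * v + 1 + (v - 1) * 5) * (2 * v * (v + 2))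
        - (v - 1) * (5 * v + 1) * (2 * (v + 2) + 2 * v)) / (2 * v * (v + 2))\<^sup>2
        = (v - 1) ^ 3 / (v\<^sup>2 * (v + 2)\<^sup>2)"
      using that by (simp add: divide_simps power2_eq_square power3_eq_cube) (simp add: algebra_simps)
    ultimately show ?thesis by simp
  qed
  \<comment> \<open>The derivative has the sign of \<open>v - 1\<close>, so \<open>h\<close> is minimal at \<open>v = 1\<close>, where it vanishes.\<close>
  have "h 1 \<le> h u"
  proof (cases "1 \<le> u")
    case True
    show ?thesis
    proof (rule DERIV_nonneg_imp_nondecreasing [OF True])
      fix v :: real assume "1 \<le> v"
      then show "\<exists>y. (h has_real_derivative y) (at v) \<and> 0 \<le> y"
        using deriv [of v] by (intro exI [of _ "(v - 1) ^ 3 / (v\<^sup>2 * (v + 2)\<^sup>2)"]) auto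
    qed
  next
    case False
    show ?thesis
    proof (rule DERIV_nonpos_imp_nonincreasing [of u 1])
      show "u \<le> 1" using False by simp
      fix v :: real assume v: "u \<le> v" "v \<le> 1"
      then have "(v - 1) ^ 3 \<le> 0" by (simp add: power_le_zero_eq)
      then show "\<exists>y. (h has_real_derivative y) (at v) \<and> y \<le> 0"
        using deriv [of v] v assms
        by (intro exI [of _ "(v - 1) ^ 3 / (v\<^sup>2 * (v + 2)\<^sup>2)"]) (auto simp: divide_nonpos_nonneg)
    qed
  qed
  then show ?thesis by (simp add: h_def)
qed

lemma pinsker_scalar_inequality:
  fixes u :: real
  assumes "0 \<le> u"
  shows "3 * (u - 1)\<^sup>2 \<le> (2 * u + 4) * (u * ln u - u + 1)"
proof (cases "u = 0")
  case False
  then have u: "0 < u" using assms by simp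
  have "(u - 1) * (5 * u + 1) \<le> ln u * (2 * u * (u + 2))"
    using ln_ge_rational_lower_bound [OF u] u by (simp add: pos_divide_le_eq)
  moreover have "(2 * u + 4) * (u * ln u - u + 1) = ln u * (2 * u * (u + 2)) - (2 * u + 4) * (u - 1)"
    and "3 * (u - 1)\<^sup>2 + (2 * u + 4) * (u - 1) = (u - 1) * (5 * u + 1)"
    by (simp_all add: algebra_simps power2_eq_square)
  ultimately show ?thesis by linarith
qed simp

lemma abs_diff_le_pinsker_pointwise:
  fixes p q c :: real
  assumes "0 \<le> p" "0 < q" "0 < c"
  shows "\<bar>p - q\<bar> \<le> c * (2 * p + 4 * q) / 6 + (p * ln (p / q) - p + q) / (2 * c)"
proof -
  define a where "a = c * (2 * p + 4 * q) / 6"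
  define b where "b = (p * ln (p / q) - p + q) / (2 * c)"
  have "3 * (p / q - 1)\<^sup>2 \<le> (2 * (p / q) + 4) * (p / q * ln (p / q) - p / q + 1)"
    using assms by (intro pinsker_scalar_inequality) simp
  then have "q\<^sup>2 * (3 * (p / q - 1)\<^sup>2) \<le> q\<^sup>2 * ((2 * (p / q) + 4) * (p / q * ln (p / q) - p / q + 1))"
    by (rule mult_left_mono) simp
  also have "q\<^sup>2 * (3 * (p / q - 1)\<^sup>2) = 3 * (p - q)\<^sup>2"
    using assms by (simp add: field_simps power2_eq_square)
  also have "q\<^sup>2 * ((2 * (p / q) + 4) * (p / q * ln (p / q) - p / q + 1)) = 12 * c\<^sup>2 * a * b / c\<^sup>2"
    using assms by (simp add: a_def b_def field_simps power2_eq_square)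
  finally have ab: "(p - q)\<^sup>2 \<le> 4 * a * b"
    using assms by simp
  have "0 < a" using assms by (simp add: a_def)
  moreover have "0 \<le> 4 * a * b" using ab zero_le_power2 [of "p - q"] by linarith
  ultimately have "0 \<le> b" by (simp add: zero_le_mult_iff)
  have "\<bar>p - q\<bar> = sqrt ((p - q)\<^sup>2)" by simp
  also have "\<dots> \<le> sqrt (4 * a * b)" using ab by (rule real_sqrt_le_mono)
  also have "\<dots> = 2 * sqrt (a * b)" by (simp add: real_sqrt_mult)
  also have "\<dots> \<le> a + b" using arith_geo_mean_sqrt [of a b] \<open>0 < a\<close> \<open>0 \<le> b\<close> by simp
  finally show ?thesis by (simp add: a_def b_def)
qed

lemma le_inf_of_c_plus_k_div_2c:
  fixes N k :: real
  assumes "0 \<le> N" and bound: "\<And>c. 0 < c \<Longrightarrow> N \<le> c + k / (2 * c)"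
  shows "N \<le> 2 * sqrt (k / 2)"
proof (cases k "0 :: real" rule: linorder_cases)
  case less
  define c where "c = sqrt (- k / 4)"
  have "0 < c" and "k = - 4 * c\<^sup>2" using less by (simp_all add: c_def)
  then have "c + k / (2 * c) = - c" by (simp add: field_simps power2_eq_square)
  then show ?thesis using bound [OF \<open>0 < c\<close>] \<open>0 < c\<close> \<open>0 \<le> N\<close> by linarith
next
  case equal
  have "N \<le> 0 + e" if "0 < e" for e using bound [OF that] equal by simp
  then have "N \<le> 0" by (rule field_le_epsilon)
  then show ?thesis using equal by simp
next
  case greater
  define c where "c = sqrt (k / 2)"
  have "0 < c" and "k = 2 * c\<^sup>2" using greater by (simp_all add: c_def)
  then have "c + k / (2 * c) = 2 * c" by (simp add: field_simps power2_eq_square)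
  then show ?thesis using bound [OF \<open>0 < c\<close>] by (simp add: c_def)
qed

definition prob_density :: "'a measure \<Rightarrow> ('a \<Rightarrow> real) \<Rightarrow> bool" where
  "prob_density M p \<longleftrightarrow> (\<forall>z\<in>space M. 0 \<le> p z) \<and> integrable M p \<and> (\<integral>z. p z \<partial>M) = 1"

lemma prob_density_mixture:
  fixes w :: "'b \<Rightarrow> real" and k :: "'b \<Rightarrow> 'a \<Rightarrow> real"
  assumes "sigma_finite_measure Y" "sigma_finite_measure M"
    and w: "prob_density Y w"
    and k_measurable: "(\<lambda>(y, z). k y z) \<in> borel_measurable (Y \<Otimes>\<^sub>M M)"
    and k: "\<And>y. y \<in> space Y \<Longrightarrow> prob_density M (k y)"
  shows "prob_density M (\<lambda>z. \<integral>y. w y * k y z \<partial>Y)"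
proof -
  interpret pair_sigma_finite Y M
    unfolding pair_sigma_finite_def using assms(1,2) by auto
  let ?F = "\<lambda>(y, z). w y * k y z"
  have w_nonneg: "\<And>y. y \<in> space Y \<Longrightarrow> 0 \<le> w y" and w_int: "integrable Y w"
    and w_one: "(\<integral>y. w y \<partial>Y) = 1"
    using w by (auto simp: prob_density_def)
  have k_nonneg: "\<And>y z. y \<in> space Y \<Longrightarrow> z \<in> space M \<Longrightarrow> 0 \<le> k y z"
    and k_one: "\<And>y. y \<in> space Y \<Longrightarrow> (\<integral>z. k y z \<partial>M) = 1"
    using k by (auto simp: prob_density_def)
  have F_measurable: "?F \<in> borel_measurable (Y \<Otimes>\<^sub>M M)"
    using borel_measurable_integrable [OF w_int] k_measurable by (simp add: case_prod_beta')
  have inner: "(\<integral>\<^sup>+z. ennreal (w y * k y z) \<partial>M) = ennreal (w y)" if "y \<in> space Y" for y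
  proof -
    have "(\<integral>\<^sup>+z. ennreal (w y * k y z) \<partial>M) = ennreal (w y) * (\<integral>\<^sup>+z. ennreal (k y z) \<partial>M)"
      using that w_nonneg k_nonneg k
      by (subst nn_integral_cmult [symmetric])
        (auto simp: prob_density_def ennreal_mult intro: borel_measurable_integrable intro!: nn_integral_cong)
    also have "(\<integral>\<^sup>+z. ennreal (k y z) \<partial>M) = 1"
      using that k k_one by (subst nn_integral_eq_integral) (auto simp: prob_density_def)
    finally show ?thesis by simp
  qed
  have "(\<integral>\<^sup>+u. ennreal (?F u) \<partial>(Y \<Otimes>\<^sub>M M)) = (\<integral>\<^sup>+y. \<integral>\<^sup>+z. ennreal (w y * k y z) \<partial>M \<partial>Y)"
    using F_measurable by (subst M2.nn_integral_fst [symmetric]) auto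
  also have "\<dots> = (\<integral>\<^sup>+y. ennreal (w y) \<partial>Y)"
    by (intro nn_integral_cong) (simp add: inner)
  also have "\<dots> = 1"
    using w_int w_one w_nonneg by (subst nn_integral_eq_integral) auto
  finally have F_int: "integrable (Y \<Otimes>\<^sub>M M) ?F"
    using F_measurable w_nonneg k_nonneg
    by (intro integrableI_nonneg) (auto simp: space_pair_measure intro!: AE_I2)
  have "(\<integral>z. \<integral>y. w y * k y z \<partial>Y \<partial>M) = integral\<^sup>L (Y \<Otimes>\<^sub>M M) ?F"
    using integral_snd [OF F_int] .
  also have "\<dots> = (\<integral>y. \<integral>z. w y * k y z \<partial>M \<partial>Y)"
    using integral_fst' [OF F_int] by simp
  also have "\<dots> = (\<integral>y. w y \<partial>Y)"
    using k_one by (intro Bochner_Integration.integral_cong) auto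
  finally show ?thesis
    using integrable_snd [OF F_int] w_nonneg k_nonneg w_one
    by (auto simp: prob_density_def intro!: integral_nonneg_AE)
qed

lemma AE_density_zero_if_absolutely_continuous:
  fixes p q :: "'a \<Rightarrow> real"
  assumes [measurable]: "p \<in> borel_measurable M" "q \<in> borel_measurable M"
    and p_nonneg: "\<And>z. z \<in> space M \<Longrightarrow> 0 \<le> p z"
    and ac: "absolutely_continuous (density M q) (density M p)"
  shows "AE z in M. q z = 0 \<longrightarrow> p z = 0"
proof -
  define S where "S = {z \<in> space M. q z = 0}"
  have [measurable]: "S \<in> sets M" unfolding S_def by measurable
  have "S \<in> null_sets (density M q)"
    by (subst null_sets_density_iff) (auto simp: S_def)
  then have "S \<in> null_sets (density M p)"
    using ac unfolding absolutely_continuous_def by auto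
  then have "AE z in M. z \<in> S \<longrightarrow> ennreal (p z) = 0"
    by (subst (asm) null_sets_density_iff) auto
  then show ?thesis
    using AE_space by eventually_elim (auto simp: S_def dest: p_nonneg)
qed

lemma (in sigma_finite_measure) entropy_density_density_eq_ln_ratio:
  fixes p q :: "'a \<Rightarrow> real"
  assumes [measurable]: "p \<in> borel_measurable M" "q \<in> borel_measurable M"
    and nonneg: "AE z in M. 0 \<le> p z" "AE z in M. 0 \<le> q z"
    and ac: "AE z in M. q z = 0 \<longrightarrow> p z = 0"
  shows "AE z in M. 0 < q z \<longrightarrow>
           entropy_density (exp 1) (density M q) (density M p) z = ln (p z / q z)"
proof -
  have "density (density M q) (\<lambda>z. ennreal (p z / q z)) = density M p"
    using density_density_divide [OF _ nonneg(2) _ nonneg(1) ac] by simp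
  moreover have "sigma_finite_measure (density M q)"
    by (subst sigma_finite_iff_density_finite) auto
  ultimately have "AE z in density M q. ennreal (p z / q z) = RN_deriv (density M q) (density M p) z"
    by (intro sigma_finite_measure.RN_deriv_unique) auto
  then have "AE z in M. 0 < q z \<longrightarrow> ennreal (p z / q z) = RN_deriv (density M q) (density M p) z"
    by (subst (asm) AE_density) auto
  then show ?thesis
    using nonneg(1)
  proof eventually_elim
    case (elim z)
    show ?case
    proof
      assume "0 < q z"
      with elim have "RN_deriv (density M q) (density M p) z = ennreal (p z / q z)" by simp
      with elim \<open>0 < q z\<close> show "entropy_density (exp 1) (density M q) (density M p) z = ln (p z / q z)"
        by (simp add: entropy_density_def log_def)
    qed
  qed
qed

lemma KLdiv_finiteD:
  fixes p q :: "'a \<Rightarrow> real"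
  assumes "sigma_finite_measure M"
    and measurable [measurable]: "p \<in> borel_measurable M" "q \<in> borel_measurable M"
    and nonneg: "\<And>z. z \<in> space M \<Longrightarrow> 0 \<le> p z" "\<And>z. z \<in> space M \<Longrightarrow> 0 \<le> q z"
    and KL: "KLdiv M p q = ereal k"
  shows "AE z in M. q z = 0 \<longrightarrow> p z = 0"
    and "integrable M (\<lambda>z. p z * ln (p z / q z))"
    and "k = (\<integral>z. p z * ln (p z / q z) \<partial>M)"
proof -
  interpret sigma_finite_measure M by fact
  let ?P = "density M p" and ?Q = "density M q"
  have ac_PQ: "absolutely_continuous ?Q ?P"
    and int: "integrable ?P (entropy_density (exp 1) ?Q ?P)"
    and k: "k = KL_divergence (exp 1) ?Q ?P"
    using KL unfolding KLdiv_def Let_def by (auto split: if_splits)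
  have AE_nonneg: "AE z in M. 0 \<le> p z" "AE z in M. 0 \<le> q z" using nonneg by auto
  show ac: "AE z in M. q z = 0 \<longrightarrow> p z = 0"
    using ac_PQ nonneg by (intro AE_density_zero_if_absolutely_continuous) auto
  have int_M: "integrable M (\<lambda>z. p z * entropy_density (exp 1) ?Q ?P z)"
    using int AE_nonneg by (subst (asm) integrable_real_density) auto
  have eq: "AE z in M. p z * entropy_density (exp 1) ?Q ?P z = p z * ln (p z / q z)"
    using entropy_density_density_eq_ln_ratio [OF measurable AE_nonneg ac] ac AE_nonneg
    by eventually_elim (metis less_eq_real_def mult_zero_left)
  show "integrable M (\<lambda>z. p z * ln (p z / q z))"
    by (intro integrable_cong_AE_imp [OF int_M _ eq]) measurable
  show "k = (\<integral>z. p z * ln (p z / q z) \<partial>M)"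
    unfolding k using AE_nonneg ac by (subst KL_density_density) (auto simp: log_def)
qed

lemma L1_dist_le_KL_tradeoff:
  fixes p q :: "'a \<Rightarrow> real"
  assumes p: "prob_density M p" and q: "prob_density M q"
    and ac: "AE z in M. q z = 0 \<longrightarrow> p z = 0"
    and int_ln: "integrable M (\<lambda>z. p z * ln (p z / q z))"
    and "0 < c"
  shows "(\<integral>z. \<bar>p z - q z\<bar> \<partial>M) \<le> c + (\<integral>z. p z * ln (p z / q z) \<partial>M) / (2 * c)"
proof -
  have int: "integrable M p" "integrable M q" and one: "(\<integral>z. p z \<partial>M) = 1" "(\<integral>z. q z \<partial>M) = 1"
    using p q by (auto simp: prob_density_def)
  have "(\<integral>z. \<bar>p z - q z\<bar> \<partial>M)
      \<le> (\<integral>z. c * (2 * p z + 4 * q z) / 6 + (p z * ln (p z / q z) - p z + q z) / (2 * c) \<partial>M)"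
  proof (rule integral_mono_AE)
    show "AE z in M. \<bar>p z - q z\<bar> \<le> c * (2 * p z + 4 * q z) / 6 + (p z * ln (p z / q z) - p z + q z) / (2 * c)"
      using ac AE_space
    proof eventually_elim
      case (elim z)
      then have "0 \<le> p z" "0 \<le> q z" using p q by (auto simp: prob_density_def)
      with elim \<open>0 < c\<close> show ?case
        by (cases "q z = 0") (auto intro: abs_diff_le_pinsker_pointwise)
    qed
  qed (use int int_ln in auto)
  also have "\<dots> = c + (\<integral>z. p z * ln (p z / q z) \<partial>M) / (2 * c)"
    using int int_ln by (simp add: one)
  finally show ?thesis .
qed

theorem pinsker_inequality:
  fixes p q :: "'a \<Rightarrow> real"
  assumes "sigma_finite_measure M" and p: "prob_density M p" and q: "prob_density M q"
    and KL: "KLdiv M p q = ereal k"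
  shows "(\<integral>z. \<bar>p z - q z\<bar> \<partial>M) \<le> 2 * sqrt (k / 2)"
proof (rule le_inf_of_c_plus_k_div_2c)
  have "p \<in> borel_measurable M" "q \<in> borel_measurable M"
    "\<And>z. z \<in> space M \<Longrightarrow> 0 \<le> p z" "\<And>z. z \<in> space M \<Longrightarrow> 0 \<le> q z"
    using p q by (auto simp: prob_density_def)
  note KL_facts = KLdiv_finiteD [OF assms(1) this KL]
  show "(\<integral>z. \<bar>p z - q z\<bar> \<partial>M) \<le> c + k / (2 * c)" if "0 < c" for c
    using L1_dist_le_KL_tradeoff [OF p q KL_facts(1,2) that] by (simp add: KL_facts(3))
qed simp

lemma L1_dist_half_le_sqrt_KLdiv:
  fixes p q :: "'a \<Rightarrow> real"
  assumes "sigma_finite_measure M" "prob_density M p" "prob_density M q"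
  shows "ereal ((\<integral>z. \<bar>p z - q z\<bar> \<partial>M) / 2) \<le> ereal_sqrt (KLdiv M p q / 2)"
proof (cases "KLdiv M p q")
  case (real k)
  then have "(\<integral>z. \<bar>p z - q z\<bar> \<partial>M) / 2 \<le> sqrt (k / 2)"
    using pinsker_inequality [OF assms] by simp
  then show ?thesis using real by (simp add: ereal_sqrt_def)
qed (auto simp: ereal_sqrt_def KLdiv_def Let_def split: if_splits)

lemma L1_dist_le_Dx:
  assumes "sigma_finite_measure M" "prob_density M (q x 0)" "prob_density M (q x 1)"
  shows "ereal (\<integral>z. \<bar>q x 0 z - q x 1 z\<bar> \<partial>M) \<le> Dx M q x"
proof -
  have "ereal (\<integral>z. \<bar>q x 0 z - q x 1 z\<bar> \<partial>M)
      = ereal ((\<integral>z. \<bar>q x 0 z - q x 1 z\<bar> \<partial>M) / 2) + ereal ((\<integral>z. \<bar>q x 1 z - q x 0 z\<bar> \<partial>M) / 2)"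
    by (simp add: abs_minus_commute)
  also have "\<dots> \<le> ereal_sqrt (KLdiv M (q x 0) (q x 1) / 2) + ereal_sqrt (KLdiv M (q x 1) (q x 0) / 2)"
    using assms by (intro add_mono L1_dist_half_le_sqrt_KLdiv)
  also have "\<dots> = Dx M q x"
    by (simp add: Dx_def)
  finally show ?thesis .
qed

lemma integrable_mult_bounded:
  fixes f g :: "'a \<Rightarrow> real"
  assumes "integrable M f" "g \<in> borel_measurable M" "\<And>z. z \<in> space M \<Longrightarrow> \<bar>g z\<bar> \<le> C"
  shows "integrable M (\<lambda>z. f z * g z)"
proof (rule Bochner_Integration.integrable_bound [where f = "\<lambda>z. C * f z"])
  show "AE z in M. norm (f z * g z) \<le> norm (C * f z)"
  proof (rule AE_I2)
    fix z assume "z \<in> space M"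
    then have "\<bar>f z\<bar> * \<bar>g z\<bar> \<le> \<bar>f z\<bar> * \<bar>C\<bar>"
      using assms(3) by (intro mult_left_mono) force+
    then show "norm (f z * g z) \<le> norm (C * f z)" by (simp add: abs_mult mult.commute)
  qed
qed (use assms in auto)

lemma integral_mult_diff_le_L1_dist:
  fixes p q L :: "'a \<Rightarrow> real"
  assumes p: "integrable M p" and q: "integrable M q"
    and L: "L \<in> borel_measurable M" and bound: "\<And>z. z \<in> space M \<Longrightarrow> \<bar>L z\<bar> \<le> C"
  shows "(\<integral>z. p z * L z \<partial>M) - (\<integral>z. q z * L z \<partial>M) \<le> C * (\<integral>z. \<bar>p z - q z\<bar> \<partial>M)"
proof -
  have "(\<integral>z. p z * L z \<partial>M) - (\<integral>z. q z * L z \<partial>M) = (\<integral>z. (p z - q z) * L z \<partial>M)"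
    using integrable_mult_bounded [OF p L bound] integrable_mult_bounded [OF q L bound]
    by (simp add: left_diff_distrib)
  also have "\<dots> \<le> (\<integral>z. C * \<bar>p z - q z\<bar> \<partial>M)"
  proof (rule integral_mono)
    show "(p z - q z) * L z \<le> C * \<bar>p z - q z\<bar>" if "z \<in> space M" for z
      using mult_left_mono [OF bound [OF that] abs_ge_zero [of "p z - q z"]]
      by (metis abs_ge_self abs_mult mult.commute order_trans)
  qed (use integrable_mult_bounded [OF Bochner_Integration.integrable_diff [OF p q] L bound] p q in auto)
  finally show ?thesis by simp
qed

lemma epsCF_le_epsF_plus_L1_dist:
  fixes q :: "'x \<Rightarrow> nat \<Rightarrow> 'a \<Rightarrow> real" and L :: "'a \<Rightarrow> nat \<Rightarrow> real"
  assumes q: "\<And>t. t \<in> {0, 1} \<Longrightarrow> integrable M (q x t)"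
    and L: "\<And>t. t \<in> {0, 1} \<Longrightarrow> (\<lambda>z. L z t) \<in> borel_measurable M"
    and bound: "\<And>z t. t \<in> {0, 1} \<Longrightarrow> z \<in> space M \<Longrightarrow> \<bar>L z t\<bar> \<le> C"
    and pT_nonneg: "\<And>t. t \<in> {0, 1} \<Longrightarrow> 0 \<le> pT x t" and pT_sum: "pT x 0 + pT x 1 = 1"
  shows "epsCF M pT q L x
    \<le> (\<Sum>t\<in>{0, 1::nat}. pT x (1 - t) * epsF M q L t x) + C * (\<integral>z. \<bar>q x 0 z - q x 1 z\<bar> \<partial>M)"
proof -
  define N where "N = (\<integral>z. \<bar>q x 0 z - q x 1 z\<bar> \<partial>M)"
  have arm: "epsCFt M q L t x \<le> epsF M q L t x + C * N" if t: "t \<in> {0, 1}" for t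
  proof -
    have "(\<integral>z. \<bar>q x (1 - t) z - q x t z\<bar> \<partial>M) = N"
      using t by (auto simp: N_def abs_minus_commute)
    moreover have "1 - t \<in> {0, 1}" using t by auto
    ultimately show ?thesis
      using integral_mult_diff_le_L1_dist [OF q q L bound, of "1 - t" t t] t
      by (simp add: epsCFt_def epsF_def)
  qed
  have "epsCF M pT q L x = pT x 1 * epsCFt M q L 0 x + pT x 0 * epsCFt M q L 1 x"
    by (simp add: epsCF_def)
  also have "\<dots> \<le> pT x 1 * (epsF M q L 0 x + C * N) + pT x 0 * (epsF M q L 1 x + C * N)"
    using arm pT_nonneg by (intro add_mono mult_left_mono) auto
  also have "\<dots> = (\<Sum>t\<in>{0, 1::nat}. pT x (1 - t) * epsF M q L t x) + (pT x 0 + pT x 1) * (C * N)"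
    by (simp add: algebra_simps)
  also have "\<dots> = (\<Sum>t\<in>{0, 1::nat}. pT x (1 - t) * epsF M q L t x) + C * N"
    using pT_sum by simp
  finally show ?thesis by (simp add: N_def)
qed

theorem lemma2:
  fixes Z :: "'z measure" and x :: 'x
    and pT :: "'x \<Rightarrow> nat \<Rightarrow> real"
    and py :: "'x \<Rightarrow> nat \<Rightarrow> real \<Rightarrow> real"
    and qphi :: "'x \<Rightarrow> real \<Rightarrow> nat \<Rightarrow> 'z \<Rightarrow> real"
    and f g :: "nat \<Rightarrow> 'z \<Rightarrow> real"
    and pYP :: "nat \<Rightarrow> 'z \<Rightarrow> real \<Rightarrow> real"
    and M :: real
  assumes Z: "sigma_finite_measure Z"
    and pT_nonneg: "\<And>t. t \<in> {0,1} \<Longrightarrow> 0 \<le> pT x t"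
    and pT_sum: "pT x 0 + pT x 1 = 1"
    and py_meas: "\<And>t. t \<in> {0,1} \<Longrightarrow> py x t \<in> borel_measurable lborel"
    and py_nonneg: "\<And>t y. t \<in> {0,1} \<Longrightarrow> 0 \<le> py x t y"
    and py_int: "\<And>t. t \<in> {0,1} \<Longrightarrow> integrable lborel (py x t)"
    and py_one: "\<And>t. t \<in> {0,1} \<Longrightarrow> (\<integral>y. py x t y \<partial>lborel) = 1"
    and qphi_meas: "\<And>t. t \<in> {0,1} \<Longrightarrow>
          (\<lambda>(y, z). qphi x y t z) \<in> borel_measurable (lborel \<Otimes>\<^sub>M Z)"
    and qphi_nonneg: "\<And>t y z. t \<in> {0,1} \<Longrightarrow> z \<in> space Z \<Longrightarrow> 0 \<le> qphi x y t z"
    and qphi_int: "\<And>t y. t \<in> {0,1} \<Longrightarrow> integrable Z (qphi x y t)"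
    and qphi_one: "\<And>t y. t \<in> {0,1} \<Longrightarrow> (\<integral>z. qphi x y t z \<partial>Z) = 1"
    and L_meas: "\<And>t. t \<in> {0,1} \<Longrightarrow> (\<lambda>z. Lf f g pYP z t) \<in> borel_measurable Z"
    and L_bound: "\<And>z t. t \<in> {0,1} \<Longrightarrow> \<bar>Lf f g pYP z t\<bar> \<le> M"
  shows "ereal (epsCF Z pT (qmarg py qphi) (Lf f g pYP) x)
         \<le> ereal (\<Sum>t\<in>{0,1::nat}. pT x (1 - t) * epsF Z (qmarg py qphi) (Lf f g pYP) t x)
           + ereal M * Dx Z (qmarg py qphi) x"
proof -
  let ?q = "qmarg py qphi" and ?L = "Lf f g pYP"
  have q_density: "prob_density Z (?q x t)" if t: "t \<in> {0, 1}" for t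
  proof -
    have "prob_density Z (\<lambda>z. \<integral>y. py x t y * qphi x y t z \<partial>lborel)"
      using Z py_nonneg py_int py_one qphi_meas qphi_nonneg qphi_int qphi_one t
      by (intro prob_density_mixture) (auto simp: prob_density_def sigma_finite_lborel)
    then show ?thesis by (simp add: qmarg_def [abs_def])
  qed
  have "0 \<le> M" using L_bound [of 0] by force
  have eps: "epsCF Z pT ?q ?L x
      \<le> (\<Sum>t\<in>{0, 1::nat}. pT x (1 - t) * epsF Z ?q ?L t x) + M * (\<integral>z. \<bar>?q x 0 z - ?q x 1 z\<bar> \<partial>Z)"
    using q_density L_meas L_bound pT_nonneg pT_sum
    by (intro epsCF_le_epsF_plus_L1_dist) (auto simp: prob_density_def)
  have L1_Dx: "ereal (\<integral>z. \<bar>?q x 0 z - ?q x 1 z\<bar> \<partial>Z) \<le> Dx Z ?q x"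
    using q_density by (intro L1_dist_le_Dx Z) auto
  from eps have "ereal (epsCF Z pT ?q ?L x)
      \<le> ereal (\<Sum>t\<in>{0, 1::nat}. pT x (1 - t) * epsF Z ?q ?L t x)
        + ereal M * ereal (\<integral>z. \<bar>?q x 0 z - ?q x 1 z\<bar> \<partial>Z)"
    by simp
  also have "\<dots> \<le> ereal (\<Sum>t\<in>{0, 1::nat}. pT x (1 - t) * epsF Z ?q ?L t x) + ereal M * Dx Z ?q x"
    using \<open>0 \<le> M\<close> by (intro add_left_mono ereal_mult_left_mono L1_Dx) simp
  finally show ?thesis .
qed

end
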